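(* Let $q$ be a power of $2$, let $f\in\mathbb{F}_q[x]$ be monic of degree $m\ge1$, and let $h(x)=x^mf(x+x^{-1})$. Then $1$ is a root of $h$ if and only if $f(0)=0$, and in that case this root of $h$ has multiplicity two if and only if $0$ has multiplicity one as a root of $f$. All roots of $h$ different from $1$ are simple if and only if all roots of $f$ different from $0$ are simple. *)

theory Defs
  imports "HOL-Algebra.Algebraic_Closure_Type" "HOL-Computational_Algebra.Polynomial"
begin

text \<open>The polynomial h(x) = x^m f(x + 1/x), where m = degree f, written out:
  x^m (x + 1/x)^i = (x^2 + 1)^i x^(m - i) for i <= m.\<close>
definition sr_transform :: "'a :: comm_ring_1 poly \<Rightarrow> 'a poly" where
  "sr_transform f =
     (\<Sum>i\<le>degree f. smult (coeff f i) ([:1, 0, 1:] ^ i * monom 1 (degree f - i)))"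

end

theory Submission
  imports Defs "HOL-Number_Theory.Residues"
begin

text \<open>For \<open>x \<noteq> 0\<close> we have \<open>h(x) = x\<^sup>m f(x + 1/x)\<close>, so \<open>h\<close> is multiplicative in \<open>f\<close>, and a
  linear factor \<open>x - \<alpha>\<close> of \<open>f\<close> becomes \<open>x\<^sup>2 - \<alpha>x + 1 = (x - \<beta>)(x - 1/\<beta>)\<close> where
  \<open>\<beta> + 1/\<beta> = \<alpha>\<close>. Hence a root \<open>\<alpha>\<close> of \<open>f\<close> of multiplicity \<open>e\<close> gives the roots \<open>\<beta>, 1/\<beta>\<close> of \<open>h\<close>
  of multiplicity \<open>e\<close>, or a single root of multiplicity \<open>2e\<close> when \<open>\<beta> = 1/\<beta>\<close>. In characteristic 2
  this coincidence happens only for \<open>\<beta> = 1\<close>, \<open>\<alpha> = 0\<close>, and over an algebraically closed field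
  every \<open>\<alpha> \<noteq> 0\<close> arises from some \<open>\<beta> \<noteq> 1\<close>.\<close>

lemma poly_sr_transform:
  fixes p :: "'a :: field poly"
  assumes "x \<noteq> 0"
  shows "poly (sr_transform p) x = x ^ degree p * poly p (x + 1/x)"
proof -
  let ?d = "degree p"
  have "poly (sr_transform p) x = (\<Sum>i\<le>?d. coeff p i * ((1 + x*x) ^ i * x ^ (?d - i)))"
    by (simp add: sr_transform_def poly_sum poly_monom)
  also have "\<dots> = (\<Sum>i\<le>?d. x ^ ?d * (coeff p i * (x + 1/x) ^ i))"
  proof (rule sum.cong)
    fix i assume "i \<in> {..?d}"
    then have d: "x ^ ?d = x ^ (?d - i) * x ^ i"
      by (simp flip: power_add)
    have sq: "(1 + x*x) ^ i = x ^ i * (x + 1/x) ^ i"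
      using assms by (simp flip: power_mult_distrib add: field_simps)
    show "coeff p i * ((1 + x*x) ^ i * x ^ (?d - i)) = x ^ ?d * (coeff p i * (x + 1/x) ^ i)"
      unfolding d sq by (simp only: ac_simps)
  qed simp
  also have "\<dots> = x ^ ?d * poly p (x + 1/x)"
    by (simp add: poly_altdef sum_distrib_left)
  finally show ?thesis .
qed

lemma poly_sr_transform_0: "poly (sr_transform p) 0 = lead_coeff (p :: 'a :: comm_ring_1 poly)"
proof -
  have "poly (sr_transform p) 0 = (\<Sum>i\<le>degree p. coeff p i * (0::'a) ^ (degree p - i))"
    by (simp add: sr_transform_def poly_sum poly_monom)
  also have "\<dots> = (\<Sum>i\<in>{degree p}. coeff p i * (0::'a) ^ (degree p - i))"
    by (rule sum.mono_neutral_right) (auto simp: power_0_left)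
  finally show ?thesis by simp
qed

lemma sr_transform_0 [simp]: "sr_transform 0 = 0"
  by (simp add: sr_transform_def)

lemma sr_transform_1 [simp]: "sr_transform 1 = 1"
  by (simp add: sr_transform_def)

lemma sr_transform_linear: "sr_transform [:-a, 1:] = [:1, -a, 1 :: 'a :: comm_ring_1:]"
  by (simp add: sr_transform_def monom_altdef numeral_2_eq_2 power2_eq_square)

lemma infinite_UNIV_alg_closed_field: "infinite (UNIV :: 'a :: alg_closed_field set)"
proof
  assume fin: "finite (UNIV :: 'a set)"
  define P :: "'a poly" where "P = (\<Prod>a\<in>UNIV. [:-a, 1:])"
  have "degree P = card (UNIV :: 'a set)"
    unfolding P_def by (subst degree_prod_sum_eq) auto
  with fin have "degree (P + 1) > 0"
    by (subst degree_add_eq_left) (auto simp: card_gt_0_iff)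
  then obtain x where "poly (P + 1) x = 0"
    using alg_closed_imp_poly_has_root by blast
  moreover have "poly P x = 0"
    using fin by (simp add: P_def poly_prod)
  ultimately show False by simp
qed

lemma sr_transform_mult_infinite:
  fixes p q :: "'a :: field poly"
  assumes "infinite (UNIV :: 'a set)"
  shows "sr_transform (p * q) = sr_transform p * sr_transform q"
proof (cases "p = 0 \<or> q = 0")
  case False
  let ?D = "sr_transform (p * q) - sr_transform p * sr_transform q"
  have "UNIV - {0} \<subseteq> {x. poly ?D x = 0}"
    using False by (auto simp: poly_sr_transform degree_mult_eq power_add)
  moreover have "infinite (UNIV - {0::'a})"
    using assms by simp
  ultimately have "infinite {x. poly ?D x = 0}"
    using finite_subset by blast
  then have "?D = 0"
    using poly_roots_finite by blast
  then show ?thesis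
    by simp
qed auto

lemma map_poly_to_ac_mult: "map_poly to_ac (p * q) = map_poly to_ac p * map_poly to_ac q"
  by (rule poly_eqI) (simp add: coeff_map_poly coeff_mult to_ac_sum)

lemma map_poly_to_ac_power: "map_poly to_ac (p ^ n) = map_poly to_ac p ^ n"
  by (induction n) (simp_all add: map_poly_to_ac_mult)

lemma map_poly_to_ac_sum: "map_poly to_ac (\<Sum>i\<in>A. f i) = (\<Sum>i\<in>A. map_poly to_ac (f i))"
proof -
  have "map_poly to_ac (p + q) = map_poly to_ac p + map_poly to_ac q" for p q :: "'a poly"
    by (rule poly_eqI) (simp add: coeff_map_poly)
  then show ?thesis
    by (induction A rule: infinite_finite_induct) simp_all
qed

lemma map_poly_to_ac_eq_iff [simp]: "map_poly to_ac p = map_poly to_ac q \<longleftrightarrow> p = q"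
proof
  assume "map_poly to_ac p = map_poly to_ac q"
  then have "coeff (map_poly to_ac p) n = coeff (map_poly to_ac q) n" for n
    by simp
  then show "p = q"
    by (intro poly_eqI) (simp add: coeff_map_poly)
qed simp

lemma map_poly_to_ac_sr_transform:
  "map_poly to_ac (sr_transform p) = sr_transform (map_poly to_ac p)"
  by (simp add: sr_transform_def map_poly_to_ac_sum map_poly_smult map_poly_to_ac_mult
      map_poly_to_ac_power map_poly_monom degree_map_poly coeff_map_poly map_poly_pCons)

text \<open>The evaluation argument needs infinitely many points, so a finite field is first
  embedded into its algebraic closure.\<close>
lemma sr_transform_mult:
  fixes p q :: "'a :: field poly"
  shows "sr_transform (p * q) = sr_transform p * sr_transform q"
proof -
  have "map_poly to_ac (sr_transform (p * q)) = map_poly to_ac (sr_transform p * sr_transform q)"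
    by (simp add: map_poly_to_ac_sr_transform map_poly_to_ac_mult
        sr_transform_mult_infinite[OF infinite_UNIV_alg_closed_field])
  then show ?thesis
    by simp
qed

lemma sr_transform_power: "sr_transform (p ^ n) = sr_transform (p :: 'a :: field poly) ^ n"
  by (induction n) (simp_all add: sr_transform_mult)

lemma order_linear_power_mult:
  assumes "poly q a \<noteq> 0"
  shows "order a ([:-a, 1:] ^ n * q) = n"
proof -
  have "[:-a, 1:] ^ n * q \<noteq> 0"
    using assms by auto
  then show ?thesis
    using assms by (simp add: order_mult order_power_n_n order_0I)
qed

lemma order_sr_transform:
  fixes F :: "'a :: field poly"
  assumes "F \<noteq> 0" and "\<beta> \<noteq> 0"
  shows "order \<beta> (sr_transform F) = (if \<beta> * \<beta> = 1 then 2 else 1) * order (\<beta> + 1/\<beta>) F"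
proof -
  define \<alpha> where "\<alpha> = \<beta> + 1/\<beta>"
  define e where "e = order \<alpha> F"
  obtain G where F: "F = [:-\<alpha>, 1:] ^ e * G" and "\<not> [:-\<alpha>, 1:] dvd G"
    using order_decomp[OF assms(1)] unfolding e_def by blast
  then have "poly G \<alpha> \<noteq> 0"
    by (simp add: poly_eq_0_iff_dvd)
  then have G_\<beta>: "poly (sr_transform G) \<beta> \<noteq> 0"
    using assms(2) by (simp add: poly_sr_transform \<alpha>_def)
  have "sr_transform F = [:1, -\<alpha>, 1:] ^ e * sr_transform G"
    by (simp add: F sr_transform_mult sr_transform_power sr_transform_linear)
  also have "[:1, -\<alpha>, 1:] = [:-\<beta>, 1:] * [:-(1/\<beta>), 1:]"
    using assms(2) by (simp add: \<alpha>_def field_simps)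
  finally have sr_F: "sr_transform F = [:-\<beta>, 1:] ^ e * ([:-(1/\<beta>), 1:] ^ e * sr_transform G)"
    by (simp only: power_mult_distrib mult.assoc)
  show ?thesis
  proof (cases "\<beta> * \<beta> = 1")
    case True
    then have "1/\<beta> = \<beta>"
      using assms(2) by (simp add: divide_eq_eq)
    then have "sr_transform F = [:-\<beta>, 1:] ^ (2 * e) * sr_transform G"
      by (simp add: sr_F mult_2 power_add mult.assoc)
    then show ?thesis
      using True G_\<beta> by (simp add: order_linear_power_mult e_def \<alpha>_def)
  next
    case False
    then have "\<beta> - 1/\<beta> \<noteq> 0"
      using assms(2) by (simp add: field_simps)
    then have "poly ([:-(1/\<beta>), 1:] ^ e * sr_transform G) \<beta> \<noteq> 0"
      using G_\<beta> by simp
    then show ?thesis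
      using False by (simp add: sr_F order_linear_power_mult e_def \<alpha>_def)
  qed
qed

lemma two_eq_zero_if_card_power_of_two:
  assumes "card (UNIV :: 'a :: {field, finite} set) = 2 ^ k"
  shows "(2 :: 'a) = 0"
proof -
  have "prime CHAR('a)"
    by (simp add: prime_CHAR_semidom finite_imp_CHAR_pos)
  moreover have "CHAR('a) dvd 2 ^ k"
    using CHAR_dvd_CARD assms by metis
  ultimately have "CHAR('a) = 2"
    by (metis prime_dvd_power primes_dvd_imp_eq two_is_prime_nat)
  then show ?thesis
    by (metis of_nat_CHAR of_nat_numeral)
qed

lemma square_eq_one_iff_char_2:
  assumes "(2 :: 'a :: idom) = 0"
  shows "\<beta> * \<beta> = 1 \<longleftrightarrow> \<beta> = (1 :: 'a)"
proof -
  have "(\<beta> - 1) * (\<beta> - 1) = \<beta> * \<beta> - 1 - 2 * (\<beta> - 1)"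
    by (simp add: algebra_simps)
  then show ?thesis
    using assms by auto
qed

lemma plus_inverse_eq_0_iff_char_2:
  fixes \<beta> :: "'a :: field"
  assumes "(2 :: 'a) = 0" and "\<beta> \<noteq> 0"
  shows "\<beta> + 1/\<beta> = 0 \<longleftrightarrow> \<beta> = 1"
proof -
  have "-1 = (1 :: 'a)"
    using assms(1) by (simp add: eq_neg_iff_add_eq_0)
  then have "\<beta> + 1/\<beta> = 0 \<longleftrightarrow> \<beta> * \<beta> = 1"
    using assms(2) by (auto simp: field_simps add_eq_0_iff)
  then show ?thesis
    using square_eq_one_iff_char_2[OF assms(1)] by simp
qed

lemma obtain_plus_inverse_eq:
  fixes \<alpha> :: "'a :: alg_closed_field"
  obtains \<beta> where "\<beta> \<noteq> 0" and "\<beta> + 1/\<beta> = \<alpha>"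
proof -
  obtain \<beta> where "poly [:1, -\<alpha>, 1:] \<beta> = 0"
    using alg_closed_imp_poly_has_root[of "[:1, -\<alpha>, 1:]"] by auto
  then have root: "1 - \<alpha> * \<beta> + \<beta> * \<beta> = 0"
    by (simp add: algebra_simps)
  then have "\<beta> \<noteq> 0"
    by auto
  moreover from root this have "\<beta> + 1/\<beta> = \<alpha>"
    by (simp add: field_simps)
  ultimately show thesis ..
qed

lemma simple_roots_sr_transform_iff_char_2:
  fixes F :: "'a :: alg_closed_field poly"
  assumes two: "(2 :: 'a) = 0" and "F \<noteq> 0"
  shows "(\<forall>\<beta>. \<beta> \<noteq> 1 \<and> poly (sr_transform F) \<beta> = 0 \<longrightarrow> order \<beta> (sr_transform F) = 1)
     \<longleftrightarrow> (\<forall>\<alpha>. \<alpha> \<noteq> 0 \<and> poly F \<alpha> = 0 \<longrightarrow> order \<alpha> F = 1)"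
proof -
  have orders: "order \<beta> (sr_transform F) = order (\<beta> + 1/\<beta>) F" if "\<beta> \<noteq> 0" "\<beta> \<noteq> 1" for \<beta>
    using order_sr_transform[OF \<open>F \<noteq> 0\<close> \<open>\<beta> \<noteq> 0\<close>] square_eq_one_iff_char_2[OF two] that by simp
  have roots: "poly (sr_transform F) \<beta> = 0 \<longleftrightarrow> poly F (\<beta> + 1/\<beta>) = 0" if "\<beta> \<noteq> 0" for \<beta>
    using that by (simp add: poly_sr_transform)
  show ?thesis
  proof
    assume simple: "\<forall>\<beta>. \<beta> \<noteq> 1 \<and> poly (sr_transform F) \<beta> = 0 \<longrightarrow> order \<beta> (sr_transform F) = 1"
    show "\<forall>\<alpha>. \<alpha> \<noteq> 0 \<and> poly F \<alpha> = 0 \<longrightarrow> order \<alpha> F = 1"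
    proof (intro allI impI, elim conjE)
      fix \<alpha> :: 'a
      assume "\<alpha> \<noteq> 0" and "poly F \<alpha> = 0"
      obtain \<beta> where "\<beta> \<noteq> 0" and \<alpha>: "\<beta> + 1/\<beta> = \<alpha>"
        using obtain_plus_inverse_eq .
      moreover from this \<open>\<alpha> \<noteq> 0\<close> have "\<beta> \<noteq> 1"
        using plus_inverse_eq_0_iff_char_2[OF two] by blast
      ultimately show "order \<alpha> F = 1"
        using simple orders[of \<beta>] roots[of \<beta>] \<open>poly F \<alpha> = 0\<close> by auto
    qed
  next
    assume simple: "\<forall>\<alpha>. \<alpha> \<noteq> 0 \<and> poly F \<alpha> = 0 \<longrightarrow> order \<alpha> F = 1"
    show "\<forall>\<beta>. \<beta> \<noteq> 1 \<and> poly (sr_transform F) \<beta> = 0 \<longrightarrow> order \<beta> (sr_transform F) = 1"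
    proof (intro allI impI, elim conjE)
      fix \<beta> :: 'a
      assume "\<beta> \<noteq> 1" and root: "poly (sr_transform F) \<beta> = 0"
      have "\<beta> \<noteq> 0"
        using root \<open>F \<noteq> 0\<close> by (auto simp: poly_sr_transform_0)
      moreover from this \<open>\<beta> \<noteq> 1\<close> have "\<beta> + 1/\<beta> \<noteq> 0"
        using plus_inverse_eq_0_iff_char_2[OF two] by blast
      ultimately show "order \<beta> (sr_transform F) = 1"
        using simple orders[of \<beta>] roots[of \<beta>] \<open>\<beta> \<noteq> 1\<close> root by auto
    qed
  qed
qed

theorem lemma2p12:
  fixes f :: "'a :: {field, finite} poly" and m :: nat
  assumes q_pow2: "\<exists>k. card (UNIV :: 'a set) = 2 ^ k"
    and monic: "lead_coeff f = 1"
    and deg: "degree f = m" and m_pos: "m \<ge> 1"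
  defines "h \<equiv> sr_transform f"
  shows "(poly h 1 = 0 \<longleftrightarrow> poly f 0 = 0)
       \<and> (poly f 0 = 0 \<longrightarrow> (order 1 h = 2 \<longleftrightarrow> order 0 f = 1))
       \<and> ((\<forall>\<beta> :: 'a alg_closure. \<beta> \<noteq> 1 \<and> poly (map_poly to_ac h) \<beta> = 0
              \<longrightarrow> order \<beta> (map_poly to_ac h) = 1)
          \<longleftrightarrow> (\<forall>\<alpha> :: 'a alg_closure. \<alpha> \<noteq> 0 \<and> poly (map_poly to_ac f) \<alpha> = 0
              \<longrightarrow> order \<alpha> (map_poly to_ac f) = 1))"
proof -
  have two: "(2 :: 'a) = 0"
    using q_pow2 two_eq_zero_if_card_power_of_two by blast
  then have two_ac: "(2 :: 'a alg_closure) = 0"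
    by (metis to_ac_0 to_ac_numeral)
  have "f \<noteq> 0"
    using monic by auto
  have "poly h 1 = poly f 0"
    using two by (simp add: h_def poly_sr_transform one_add_one)
  moreover have "order 1 h = 2 * order 0 f"
    using order_sr_transform[OF \<open>f \<noteq> 0\<close>, of 1] two by (simp add: h_def one_add_one)
  moreover have "map_poly to_ac f \<noteq> 0"
    using \<open>f \<noteq> 0\<close> by (simp add: map_poly_eq_0_iff)
  ultimately show ?thesis
    using simple_roots_sr_transform_iff_char_2[OF two_ac]
    by (simp add: h_def map_poly_to_ac_sr_transform)
qed

end
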